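(* Let $q\ge2$ be an integer and $1\le p<q$. Let $(a_t)_{t\in\mathbb{Z}}$ be i.i.d. nonnegative random variables with $\|a_0\|_p<1$ and $\|a_0\|_q\ge1$, and let $(\varepsilon_t)_{t\in\mathbb{Z}}$ be identically distributed integrable random variables with $\mathbb{E}|\varepsilon_0|>0$, independent of $(a_t)$. Set $Z_{t-1}=a_{t-1}a_{t-2}\cdots a_{t-q}$ and consider $X_t=\sum_{j\ge1}\prod_{i=1}^jZ_{t-i}\,\varepsilon_{t-j}+\varepsilon_t$ (the solution of $X_t=Z_{t-1}X_{t-1}+\varepsilon_t$). Then $\|Z_0\|_p<1$, but $\mathbb{E}\big[\prod_{i=1}^jZ_{t-i}\big]$ does not converge to $0$ as $j\to\infty$; consequently $\big\|\prod_{i=1}^jZ_{t-i}\varepsilon_{t-j}\big\|_1$ does not tend to $0$ and the series defining $X_t$ does not converge in $\mathbb{L}^1$.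
   Context: $\|X\|_p=(\mathbb{E}|X|^p)^{1/p}$. *)

theory Defs
  imports "HOL-Probability.Probability"
begin

definition Lp_norm :: "'a measure \<Rightarrow> real \<Rightarrow> ('a \<Rightarrow> real) \<Rightarrow> ennreal" where
  "Lp_norm M p X =
     (let m = (\<integral>\<^sup>+ x. ennreal (\<bar>X x\<bar> powr p) \<partial>M)
      in if m = \<infinity> then \<infinity> else ennreal (enn2real m powr (1 / p)))"

text \<open>Z s = a_s a_(s-1) ... a_(s-q+1), so that Z_(t-1) = a_(t-1) ... a_(t-q).\<close>
definition Zprod :: "(int \<Rightarrow> 'a \<Rightarrow> real) \<Rightarrow> nat \<Rightarrow> int \<Rightarrow> 'a \<Rightarrow> real" where
  "Zprod a q s x = (\<Prod>k<q. a (s - int k) x)"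

definition partial_X :: "(int \<Rightarrow> 'a \<Rightarrow> real) \<Rightarrow> (int \<Rightarrow> 'a \<Rightarrow> real) \<Rightarrow> nat \<Rightarrow> int \<Rightarrow> nat \<Rightarrow> 'a \<Rightarrow> real" where
  "partial_X a eps q t n x =
     eps t x + (\<Sum>j\<in>{1..n}. (\<Prod>i\<in>{1..j}. Zprod a q (t - int i) x) * eps (t - int j) x)"

end

theory Submission
  imports Defs
begin

text \<open>Written out in the coefficients, prod_(i=1)^j Z_(t-i) is a product of powers a_(t-u)^(n_u),
  1 \<le> u \<le> j+q-1, where n_u counts the windows {i..i+q-1} containing u: n_u = q for q \<le> u \<le> j,
  and n_u \<le> q for the at most 2q remaining u near the two ends. By independence its expectation
  is the product of the moments E a_0^(n_u). The interior moments are E a_0^q \<ge> 1, and the boundary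
  ones are bounded below by a positive constant, so the expectation stays away from 0.
  Independence of (a_t) and (eps_t) makes the L^1 norm of the j-th term of the series this
  expectation times E|eps_0| > 0, hence the partial sums are not L^1-Cauchy.
  On the other hand E Z_0^p = (E a_0^p)^q < 1.\<close>

lemma powr_less_one_iff:
  fixes r :: real
  assumes "0 \<le> r" "0 < e"
  shows "r powr e < 1 \<longleftrightarrow> r < 1"
proof
  show "r < 1" if "r powr e < 1"
    using that ge_one_powr_ge_zero[of r e] assms by (cases "r < 1") auto
  show "r powr e < 1" if "r < 1"
    using that powr_less_mono2[of e r 1] assms by simp
qed

lemma Lp_norm_less_one_iff:
  assumes "0 < p"
  shows "Lp_norm M p X < 1 \<longleftrightarrow> (\<integral>\<^sup>+x. ennreal (\<bar>X x\<bar> powr p) \<partial>M) < 1"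
proof (cases "(\<integral>\<^sup>+x. ennreal (\<bar>X x\<bar> powr p) \<partial>M)")
  case (real r)
  then show ?thesis
    using assms by (simp add: Lp_norm_def ennreal_less_one_iff powr_less_one_iff)
qed (simp add: Lp_norm_def)

lemma Lp_norm_one: "Lp_norm M 1 X = (\<integral>\<^sup>+x. ennreal \<bar>X x\<bar> \<partial>M)"
  by (cases "(\<integral>\<^sup>+x. ennreal \<bar>X x\<bar> \<partial>M)") (simp_all add: Lp_norm_def)

lemma Lp_norm_one_diff_triangle:
  assumes [measurable]: "f \<in> borel_measurable M" "g \<in> borel_measurable M" "h \<in> borel_measurable M"
  shows "Lp_norm M 1 (\<lambda>x. f x - g x) \<le> Lp_norm M 1 (\<lambda>x. f x - h x) + Lp_norm M 1 (\<lambda>x. g x - h x)"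
proof -
  have "(\<integral>\<^sup>+x. ennreal \<bar>f x - g x\<bar> \<partial>M) \<le> (\<integral>\<^sup>+x. ennreal \<bar>f x - h x\<bar> + ennreal \<bar>g x - h x\<bar> \<partial>M)"
    by (intro nn_integral_mono) (simp flip: ennreal_plus)
  also have "\<dots> = (\<integral>\<^sup>+x. ennreal \<bar>f x - h x\<bar> \<partial>M) + (\<integral>\<^sup>+x. ennreal \<bar>g x - h x\<bar> \<partial>M)"
    by (rule nn_integral_add) auto
  finally show ?thesis by (simp only: Lp_norm_one)
qed

lemma L1_convergent_imp_increments_tendsto_zero:
  assumes [measurable]: "\<And>n. S n \<in> borel_measurable M" "Y \<in> borel_measurable M"
    and lim: "(\<lambda>n. Lp_norm M 1 (\<lambda>x. S n x - Y x)) \<longlonglongrightarrow> 0"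
  shows "(\<lambda>n. Lp_norm M 1 (\<lambda>x. S (Suc n) x - S n x)) \<longlonglongrightarrow> 0"
proof (rule tendsto_sandwich[OF _ _ tendsto_const])
  show "(\<lambda>n. Lp_norm M 1 (\<lambda>x. S (Suc n) x - Y x) + Lp_norm M 1 (\<lambda>x. S n x - Y x)) \<longlonglongrightarrow> 0"
    using tendsto_add[OF LIMSEQ_Suc[OF lim] lim] by simp
  show "\<forall>\<^sub>F n in sequentially. Lp_norm M 1 (\<lambda>x. S (Suc n) x - S n x)
          \<le> Lp_norm M 1 (\<lambda>x. S (Suc n) x - Y x) + Lp_norm M 1 (\<lambda>x. S n x - Y x)"
    by (intro always_eventually allI Lp_norm_one_diff_triangle) simp_all
qed simp

lemma not_LIMSEQ_below_lower_bound:
  fixes f :: "nat \<Rightarrow> 'a::linorder_topology"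
  assumes "l < c" and "\<And>n. N \<le> n \<Longrightarrow> c \<le> f n"
  shows "\<not> f \<longlonglongrightarrow> l"
  using assms LIMSEQ_le_const[of f l c] leD by blast

text \<open>The number of i \<in> {1..j} with u \<in> {i..i+q-1}, counted through k = u - i.\<close>
definition window_multiplicity :: "nat \<Rightarrow> nat \<Rightarrow> nat \<Rightarrow> nat" where
  "window_multiplicity q j u = card {k. k < q \<and> k < u \<and> u \<le> k + j}"

lemma window_multiplicity_le: "window_multiplicity q j u \<le> q"
  using card_mono[of "{..<q}" "{k. k < q \<and> k < u \<and> u \<le> k + j}"]
  by (auto simp: window_multiplicity_def)

lemma window_multiplicity_interior: "q \<le> u \<Longrightarrow> u \<le> j \<Longrightarrow> window_multiplicity q j u = q"
proof -
  assume "q \<le> u" "u \<le> j"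
  then have "{k. k < q \<and> k < u \<and> u \<le> k + j} = {..<q}" by auto
  then show ?thesis by (simp add: window_multiplicity_def)
qed

lemma prod_sliding_windows:
  fixes g :: "nat \<Rightarrow> 'b::comm_monoid_mult"
  shows "(\<Prod>i\<in>{1..j}. \<Prod>k<q. g (i + k)) = (\<Prod>u\<in>{1..j+q-1}. g u ^ window_multiplicity q j u)"
proof -
  have window: "(\<Prod>i\<in>{1..j}. g (i + k)) = (\<Prod>u\<in>{1..j+q-1}. if k < u \<and> u \<le> k + j then g u else 1)"
    if "k < q" for k
  proof -
    have "(\<Prod>i\<in>{1..j}. g (i + k)) = (\<Prod>u\<in>{1+k..j+k}. g u)"
      by (rule prod.shift_bounds_cl_nat_ivl[symmetric])
    also have "{1+k..j+k} = {u\<in>{1..j+q-1}. k < u \<and> u \<le> k + j}" using that by auto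
    also have "(\<Prod>u\<in>\<dots>. g u) = (\<Prod>u\<in>{1..j+q-1}. if k < u \<and> u \<le> k + j then g u else 1)"
      by (rule prod.inter_filter) simp
    finally show ?thesis .
  qed
  have multiplicity: "(\<Prod>k<q. if k < u \<and> u \<le> k + j then g u else 1) = g u ^ window_multiplicity q j u" for u
    by (simp add: prod.If_cases window_multiplicity_def conj_assoc Int_def)
  have "(\<Prod>i\<in>{1..j}. \<Prod>k<q. g (i + k)) = (\<Prod>k<q. \<Prod>i\<in>{1..j}. g (i + k))"
    by (rule prod.swap)
  also have "\<dots> = (\<Prod>k<q. \<Prod>u\<in>{1..j+q-1}. if k < u \<and> u \<le> k + j then g u else 1)"
    by (intro prod.cong refl window) simp
  also have "\<dots> = (\<Prod>u\<in>{1..j+q-1}. \<Prod>k<q. if k < u \<and> u \<le> k + j then g u else 1)"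
    by (rule prod.swap)
  also have "\<dots> = (\<Prod>u\<in>{1..j+q-1}. g u ^ window_multiplicity q j u)"
    by (simp add: multiplicity)
  finally show ?thesis .
qed

context prob_space
begin

lemma nn_integral_identically_distributed:
  assumes [measurable]: "X \<in> borel_measurable M" "Y \<in> borel_measurable M" "f \<in> borel_measurable borel"
    and "distr M borel X = distr M borel Y"
  shows "(\<integral>\<^sup>+x. f (X x) \<partial>M) = (\<integral>\<^sup>+x. f (Y x) \<partial>M)"
proof -
  have "(\<integral>\<^sup>+x. f (X x) \<partial>M) = (\<integral>\<^sup>+y. f y \<partial>distr M borel X)"
    by (simp add: nn_integral_distr)
  also have "\<dots> = (\<integral>\<^sup>+x. f (Y x) \<partial>M)"
    by (simp add: assms(4) nn_integral_distr)
  finally show ?thesis .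
qed

lemma indep_vars_nn_integral_iid:
  assumes indep: "indep_vars (\<lambda>_. borel) X UNIV"
    and ident: "\<And>i. distr M borel (X i) = distr M borel (X i\<^sub>0)"
    and "finite S" and f: "\<And>i. i \<in> S \<Longrightarrow> f i \<in> borel_measurable borel"
  shows "(\<integral>\<^sup>+x. (\<Prod>i\<in>S. ennreal (f i (X i x))) \<partial>M) = (\<Prod>i\<in>S. \<integral>\<^sup>+x. ennreal (f i (X i\<^sub>0 x)) \<partial>M)"
proof -
  have [measurable]: "X i \<in> borel_measurable M" for i
    using indep by (simp add: indep_vars_def)
  have "indep_vars (\<lambda>_. borel) (\<lambda>i x. ennreal (f i (X i x))) S"
    by (rule indep_vars_compose2[OF indep_vars_subset[OF indep]]) (use f in auto)
  then have "(\<integral>\<^sup>+x. (\<Prod>i\<in>S. ennreal (f i (X i x))) \<partial>M) = (\<Prod>i\<in>S. \<integral>\<^sup>+x. ennreal (f i (X i x)) \<partial>M)"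
    by (rule indep_vars_nn_integral[OF \<open>finite S\<close>]) simp
  also have "\<dots> = (\<Prod>i\<in>S. \<integral>\<^sup>+x. ennreal (f i (X i\<^sub>0 x)) \<partial>M)"
    using f ident by (intro prod.cong refl nn_integral_identically_distributed) auto
  finally show ?thesis .
qed

lemma indep_var_nn_integral:
  fixes X Y :: "'a \<Rightarrow> ennreal"
  assumes "indep_var borel X borel Y"
  shows "(\<integral>\<^sup>+x. X x * Y x \<partial>M) = (\<integral>\<^sup>+x. X x \<partial>M) * (\<integral>\<^sup>+x. Y x \<partial>M)"
proof -
  have borel: "(\<lambda>_. borel) = case_bool borel borel"
    by (simp add: fun_eq_iff split: bool.split)
  have "indep_vars (\<lambda>_. borel) (case_bool X Y) UNIV"
    using assms unfolding indep_var_def borel .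
  then have "(\<integral>\<^sup>+x. (\<Prod>i\<in>UNIV. case_bool X Y i x) \<partial>M) = (\<Prod>i\<in>UNIV. \<integral>\<^sup>+x. case_bool X Y i x \<partial>M)"
    by (subst indep_vars_nn_integral) auto
  then show ?thesis by (simp add: UNIV_bool mult.commute)
qed

end

locale random_coefficient_model = prob_space M for M :: "'w measure" +
  fixes a eps :: "int \<Rightarrow> 'w \<Rightarrow> real" and q :: nat and p :: real
  assumes q: "q \<ge> 2" and p: "1 \<le> p"
    and a_iid: "indep_vars (\<lambda>_. borel) a UNIV"
    and a_ident: "\<And>t. distr M borel (a t) = distr M borel (a 0)"
    and a_nonneg: "\<And>t x. x \<in> space M \<Longrightarrow> a t x \<ge> 0"
    and a_p: "Lp_norm M p (a 0) < 1"
    and a_q: "Lp_norm M (real q) (a 0) \<ge> 1"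
    and eps_meas: "\<And>t. eps t \<in> borel_measurable M"
    and eps_ident: "\<And>t. distr M borel (eps t) = distr M borel (eps 0)"
    and eps_int: "integrable M (eps 0)"
    and eps_pos: "(\<integral>x. \<bar>eps 0 x\<bar> \<partial>M) > 0"
    and indep: "indep_var (PiM UNIV (\<lambda>_. borel)) (\<lambda>x t. a t x)
                          (PiM UNIV (\<lambda>_. borel)) (\<lambda>x t. eps t x)"
begin

lemma a_measurable[measurable]: "a t \<in> borel_measurable M"
  using a_iid by (simp add: indep_vars_def)

declare eps_meas[measurable]

abbreviation Zchain :: "int \<Rightarrow> nat \<Rightarrow> 'w \<Rightarrow> real" where
  "Zchain t j x \<equiv> \<Prod>i\<in>{1..j}. Zprod a q (t - int i) x"

definition moment :: "nat \<Rightarrow> ennreal" where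
  "moment m = (\<integral>\<^sup>+x. ennreal (a 0 x ^ m) \<partial>M)"

lemma Lp_norm_Zprod_less_one: "Lp_norm M p (Zprod a q 0) < 1"
proof -
  let ?S = "(\<lambda>k::nat. - int k) ` {..<q}" and ?m = "\<integral>\<^sup>+x. ennreal (\<bar>a 0 x\<bar> powr p) \<partial>M"
  have inj: "inj_on (\<lambda>k::nat. - int k) {..<q}" by (auto simp: inj_on_def)
  have "(\<integral>\<^sup>+x. ennreal (\<bar>Zprod a q 0 x\<bar> powr p) \<partial>M) = (\<integral>\<^sup>+x. (\<Prod>s\<in>?S. ennreal (\<bar>a s x\<bar> powr p)) \<partial>M)"
    by (simp add: Zprod_def prod.reindex[OF inj] abs_prod prod_powr_distrib prod_ennreal)
  also have "\<dots> = ?m ^ q"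
    using card_image[OF inj]
    by (simp add: indep_vars_nn_integral_iid[OF a_iid a_ident, where f="\<lambda>_ y. \<bar>y\<bar> powr p"])
  also have "\<dots> \<le> ?m ^ 1"
    using a_p p q by (intro power_decreasing) (auto simp: Lp_norm_less_one_iff)
  also have "\<dots> < 1"
    using a_p p by (simp add: Lp_norm_less_one_iff)
  finally show ?thesis
    using p by (simp add: Lp_norm_less_one_iff)
qed

lemma moment_q_ge_one: "1 \<le> moment q"
proof -
  have "(\<integral>\<^sup>+x. ennreal (\<bar>a 0 x\<bar> powr real q) \<partial>M) = moment q"
    unfolding moment_def using q a_nonneg
    by (intro nn_integral_cong) (simp add: powr_realpow')
  then show ?thesis
    using a_q q by (simp add: Lp_norm_less_one_iff flip: not_less)
qed

lemma moment_pos: "m \<le> q \<Longrightarrow> 0 < moment m"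
proof (rule ccontr)
  assume "\<not> 0 < moment m"
  then have "moment m = 0" by (simp add: zero_less_iff_neq_zero)
  moreover have "moment 0 = 1"
    by (simp add: moment_def emeasure_space_1)
  ultimately have "m \<noteq> 0" by (metis zero_neq_one)
  have "AE x in M. ennreal (a 0 x ^ m) = 0"
    using \<open>moment m = 0\<close> by (simp add: moment_def nn_integral_0_iff_AE)
  then have "AE x in M. a 0 x = 0"
    using AE_space
  proof eventually_elim
    case (elim x)
    then have "a 0 x ^ m \<le> 0" "0 \<le> a 0 x"
      using a_nonneg by (simp_all add: ennreal_eq_0_iff)
    then have "a 0 x ^ m = 0"
      by (meson antisym zero_le_power)
    with \<open>m \<noteq> 0\<close> show ?case by simp
  qed
  then have "AE x in M. ennreal (a 0 x ^ q) = 0"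
    using q by (auto elim!: AE_mp)
  then have "moment q = 0"
    by (simp add: moment_def nn_integral_0_iff_AE)
  with moment_q_ge_one show False by simp
qed

lemma moments_bounded_below:
  obtains \<delta> where "0 < \<delta>" "\<delta> \<le> 1" "\<And>m. m \<le> q \<Longrightarrow> \<delta> \<le> moment m"
proof
  let ?\<delta> = "Min ((\<lambda>m. min 1 (moment m)) ` {..q})"
  show "0 < ?\<delta>"
    by (subst Min_gr_iff) (auto simp: moment_pos)
  have le_min: "?\<delta> \<le> min 1 (moment m)" if "m \<le> q" for m
    using that by (intro Min_le) auto
  show "?\<delta> \<le> 1"
    using le_min[of 0] by simp
  show "?\<delta> \<le> moment m" if "m \<le> q" for m
    using le_min[OF that] by simp
qed

lemma Zchain_eq_prod_powers:
  "Zchain t j x = (\<Prod>u\<in>{1..j+q-1}. a (t - int u) x ^ window_multiplicity q j u)"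
  using prod_sliding_windows[where g="\<lambda>u. a (t - int u) x" and j=j and q=q]
  by (simp add: Zprod_def algebra_simps)

lemma nn_integral_Zchain:
  "(\<integral>\<^sup>+x. ennreal (Zchain t j x) \<partial>M) = (\<Prod>u\<in>{1..j+q-1}. moment (window_multiplicity q j u))"
proof -
  let ?U = "{1..j+q-1}" and ?s = "\<lambda>u::nat. t - int u"
  have inj: "inj_on ?s ?U" by (auto simp: inj_on_def)
  have "(\<integral>\<^sup>+x. ennreal (Zchain t j x) \<partial>M)
      = (\<integral>\<^sup>+x. (\<Prod>u\<in>?U. ennreal (a (?s u) x ^ window_multiplicity q j u)) \<partial>M)"
    unfolding Zchain_eq_prod_powers using a_nonneg
    by (intro nn_integral_cong) (simp add: prod_ennreal)
  also have "\<dots> = (\<integral>\<^sup>+x. (\<Prod>s\<in>?s ` ?U. ennreal (a s x ^ window_multiplicity q j (nat (t - s)))) \<partial>M)"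
    by (subst prod.reindex[OF inj]) simp
  also have "\<dots> = (\<Prod>s\<in>?s ` ?U. moment (window_multiplicity q j (nat (t - s))))"
    unfolding moment_def
    by (rule indep_vars_nn_integral_iid[OF a_iid a_ident]) auto
  also have "\<dots> = (\<Prod>u\<in>?U. moment (window_multiplicity q j u))"
    by (subst prod.reindex[OF inj]) simp
  finally show ?thesis .
qed

lemma nn_integral_Zchain_bounded_below:
  obtains c where "0 < c" "\<And>t j. q \<le> j \<Longrightarrow> c \<le> (\<integral>\<^sup>+x. ennreal (Zchain t j x) \<partial>M)"
proof -
  obtain \<delta> where \<delta>: "0 < \<delta>" "\<delta> \<le> 1" "\<And>m. m \<le> q \<Longrightarrow> \<delta> \<le> moment m"
    using moments_bounded_below by blast
  have "\<delta> ^ (2 * q) \<le> (\<integral>\<^sup>+x. ennreal (Zchain t j x) \<partial>M)" if "q \<le> j" for t j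
  proof -
    let ?U = "{1..j+q-1}" and ?I = "{u. q \<le> u \<and> u \<le> j}"
    have "card (?U - ?I) \<le> card ({1..<q} \<union> {j+1..j+q})"
      by (intro card_mono) auto
    also have "\<dots> \<le> 2 * q"
      using card_Un_le[of "{1..<q}" "{j+1..j+q}"] by simp
    finally have "\<delta> ^ (2 * q) \<le> \<delta> ^ card (?U - ?I)"
      using \<delta> by (intro power_decreasing) auto
    also have "\<dots> = (\<Prod>u\<in>?U. if u \<in> ?I then 1 else \<delta>)"
      by (simp add: prod.If_cases Diff_eq)
    also have "\<dots> \<le> (\<Prod>u\<in>?U. moment (window_multiplicity q j u))"
      using \<delta>(3)[OF window_multiplicity_le] moment_q_ge_one
      by (intro prod_mono_ennreal) (auto simp: window_multiplicity_interior)
    also have "\<dots> = (\<integral>\<^sup>+x. ennreal (Zchain t j x) \<partial>M)"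
      by (rule nn_integral_Zchain[symmetric])
    finally show ?thesis .
  qed
  moreover have "0 < \<delta> ^ (2 * q)"
    using \<delta>(1) by (metis gr_zeroI not_gr_zero power_not_zero)
  ultimately show ?thesis using that by blast
qed

lemma Lp_norm_Zchain_times_eps:
  "Lp_norm M 1 (\<lambda>x. Zchain t j x * eps (t - int j) x)
     = (\<integral>\<^sup>+x. ennreal (Zchain t j x) \<partial>M) * ennreal (\<integral>x. \<bar>eps 0 x\<bar> \<partial>M)"
proof -
  have "indep_var borel ((\<lambda>\<omega>. ennreal (\<Prod>i\<in>{1..j}. \<Prod>k<q. \<omega> (t - int i - int k))) \<circ> (\<lambda>x t. a t x))
                  borel ((\<lambda>\<omega>. ennreal \<bar>\<omega> (t - int j)\<bar>) \<circ> (\<lambda>x t. eps t x))"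
    by (rule indep_var_compose[OF indep]) measurable
  then have "indep_var borel (\<lambda>x. ennreal (Zchain t j x)) borel (\<lambda>x. ennreal \<bar>eps (t - int j) x\<bar>)"
    by (simp add: comp_def Zprod_def)
  then have "Lp_norm M 1 (\<lambda>x. Zchain t j x * eps (t - int j) x)
     = (\<integral>\<^sup>+x. ennreal (Zchain t j x) \<partial>M) * (\<integral>\<^sup>+x. ennreal \<bar>eps (t - int j) x\<bar> \<partial>M)"
    unfolding Lp_norm_one using a_nonneg
    by (subst indep_var_nn_integral[symmetric])
       (auto intro!: nn_integral_cong simp: Zprod_def abs_mult prod_nonneg ennreal_mult)
  also have "(\<integral>\<^sup>+x. ennreal \<bar>eps (t - int j) x\<bar> \<partial>M) = (\<integral>\<^sup>+x. ennreal \<bar>eps 0 x\<bar> \<partial>M)"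
    by (rule nn_integral_identically_distributed[OF _ _ _ eps_ident]) auto
  also have "\<dots> = ennreal (\<integral>x. \<bar>eps 0 x\<bar> \<partial>M)"
    by (rule nn_integral_eq_integral) (auto intro: integrable_abs eps_int)
  finally show ?thesis .
qed

lemma nn_integral_Zchain_not_tendsto_zero:
  "\<not> (\<lambda>j. \<integral>\<^sup>+x. ennreal (Zchain t j x) \<partial>M) \<longlonglongrightarrow> 0"
proof -
  obtain c where "0 < c" "\<And>t j. q \<le> j \<Longrightarrow> c \<le> (\<integral>\<^sup>+x. ennreal (Zchain t j x) \<partial>M)"
    using nn_integral_Zchain_bounded_below by blast
  then show ?thesis
    by (rule not_LIMSEQ_below_lower_bound)
qed

lemma Lp_norm_Zchain_times_eps_not_tendsto_zero:
  "\<not> (\<lambda>j. Lp_norm M 1 (\<lambda>x. Zchain t j x * eps (t - int j) x)) \<longlonglongrightarrow> 0"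
proof -
  obtain c where "0 < c" "\<And>t j. q \<le> j \<Longrightarrow> c \<le> (\<integral>\<^sup>+x. ennreal (Zchain t j x) \<partial>M)"
    using nn_integral_Zchain_bounded_below by blast
  then have "c * ennreal (\<integral>x. \<bar>eps 0 x\<bar> \<partial>M) \<le> Lp_norm M 1 (\<lambda>x. Zchain t j x * eps (t - int j) x)"
    if "q \<le> j" for j
    unfolding Lp_norm_Zchain_times_eps using that by (intro mult_right_mono) auto
  moreover have "0 < c * ennreal (\<integral>x. \<bar>eps 0 x\<bar> \<partial>M)"
    using \<open>0 < c\<close> eps_pos by (simp add: ennreal_zero_less_mult_iff)
  ultimately show ?thesis
    by (rule not_LIMSEQ_below_lower_bound[rotated])
qed

lemma partial_X_measurable[measurable]: "partial_X a eps q t n \<in> borel_measurable M"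
  unfolding partial_X_def Zprod_def by measurable

lemma partial_X_Suc:
  "partial_X a eps q t (Suc n) x = partial_X a eps q t n x + Zchain t (Suc n) x * eps (t - int (Suc n)) x"
  by (simp add: partial_X_def)

lemma partial_X_not_L1_convergent:
  "\<not> (\<exists>Y \<in> borel_measurable M. (\<lambda>n. Lp_norm M 1 (\<lambda>x. partial_X a eps q t n x - Y x)) \<longlonglongrightarrow> 0)"
proof
  assume "\<exists>Y \<in> borel_measurable M. (\<lambda>n. Lp_norm M 1 (\<lambda>x. partial_X a eps q t n x - Y x)) \<longlonglongrightarrow> 0"
  then have "(\<lambda>n. Lp_norm M 1 (\<lambda>x. partial_X a eps q t (Suc n) x - partial_X a eps q t n x)) \<longlonglongrightarrow> 0"
    by (auto intro: L1_convergent_imp_increments_tendsto_zero)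
  then have "(\<lambda>n. Lp_norm M 1 (\<lambda>x. Zchain t (Suc n) x * eps (t - int (Suc n)) x)) \<longlonglongrightarrow> 0"
    by (simp only: partial_X_Suc add_diff_cancel_left')
  then have "(\<lambda>j. Lp_norm M 1 (\<lambda>x. Zchain t j x * eps (t - int j) x)) \<longlonglongrightarrow> 0"
    by (rule LIMSEQ_imp_Suc)
  with Lp_norm_Zchain_times_eps_not_tendsto_zero show False by blast
qed

end

theorem mainTheorem13:
  fixes M :: "'w measure" and a eps :: "int \<Rightarrow> 'w \<Rightarrow> real" and q :: nat and p :: real
  assumes M: "prob_space M"
    and q: "q \<ge> 2" and p: "1 \<le> p" "p < real q"
    and a_iid: "prob_space.indep_vars M (\<lambda>_. borel) a UNIV"
    and a_ident: "\<And>t. distr M borel (a t) = distr M borel (a 0)"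
    and a_nonneg: "\<And>t x. x \<in> space M \<Longrightarrow> a t x \<ge> 0"
    and a_p: "Lp_norm M p (a 0) < 1"
    and a_q: "Lp_norm M (real q) (a 0) \<ge> 1"
    and eps_meas: "\<And>t. eps t \<in> borel_measurable M"
    and eps_ident: "\<And>t. distr M borel (eps t) = distr M borel (eps 0)"
    and eps_int: "integrable M (eps 0)"
    and eps_pos: "(\<integral>x. \<bar>eps 0 x\<bar> \<partial>M) > 0"
    and indep: "prob_space.indep_var M (PiM UNIV (\<lambda>_. borel)) (\<lambda>x t. a t x)
                                        (PiM UNIV (\<lambda>_. borel)) (\<lambda>x t. eps t x)"
  shows "Lp_norm M p (Zprod a q 0) < 1
         \<and> (\<forall>t. \<not> ((\<lambda>j. \<integral>\<^sup>+ x. ennreal (\<Prod>i\<in>{1..j}. Zprod a q (t - int i) x) \<partial>M)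
                       \<longlonglongrightarrow> 0))
         \<and> (\<forall>t. \<not> ((\<lambda>j. Lp_norm M 1 (\<lambda>x. (\<Prod>i\<in>{1..j}. Zprod a q (t - int i) x) * eps (t - int j) x))
                       \<longlonglongrightarrow> 0))
         \<and> (\<forall>t. \<not> (\<exists>Y \<in> borel_measurable M.
                       (\<lambda>n. Lp_norm M 1 (\<lambda>x. partial_X a eps q t n x - Y x)) \<longlonglongrightarrow> 0))"
proof -
  interpret random_coefficient_model M a eps q p
    by (intro random_coefficient_model.intro random_coefficient_model_axioms.intro; rule assms)
  show ?thesis
    using Lp_norm_Zprod_less_one nn_integral_Zchain_not_tendsto_zero
      Lp_norm_Zchain_times_eps_not_tendsto_zero partial_X_not_L1_convergent
    by blast
qed

end
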